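(* Consider the closed-loop system described in the context, with fixed matrices $A,E,C,D,B$ and gains $K_0,K_1,K_2$, and with $c(\sigma)=\|\sigma\|^{-1/2}+\alpha$ for a given $\alpha>0$. Let $v(\zeta)=\zeta^TS\zeta$ and $V(x)=x^TR(\sigma)PR(\sigma)x$. If the matrix inequality $$\begin{bmatrix} A^TS+SA+\rho S & \bullet \\ \alpha^{-1}G_0^TE^TS & -\rho P\end{bmatrix}<0$$ is satisfied for scalars $\alpha>0$, $\rho>0$ and symmetric matrices $S\in\mathbb{R}^{r\times r}$, $S>0$, $P\in\mathbb{R}^{2n\times 2n}$, $P>0$, then along arbitrary trajectories of the linear subsystem $\dot\zeta=A\zeta+E\sigma$ (with $\sigma=G_0x$) the inequality $$\dot v<\rho\,(V-v)$$ holds for all $0\neq\zeta\in\mathbb{R}^r$ and all $0\neq x\in\mathbb{R}^{2n}$.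
   Context: Closed-loop system: $\dot\zeta=A\zeta+E\sigma$, $\dot\sigma=C\zeta+D\sigma+Bu+f(t)$, $\dot\eta=c(\sigma)^2\sigma$, $u=K_0\zeta+c(\sigma)K_1\sigma+K_2\eta$, with $\zeta\in\mathbb{R}^r$, $\sigma,\eta\in\mathbb{R}^n$, $u\in\mathbb{R}^m$, $A\in\mathbb{R}^{r\times r}$ Hurwitz, $E\in\mathbb{R}^{r\times n}$, $C\in\mathbb{R}^{n\times r}$, $D\in\mathbb{R}^{n\times n}$, $B\in\mathbb{R}^{n\times m}$ of full row rank, $f:\mathbb{R}_+\to\mathbb{R}^n$ smooth, and $c(\sigma)=1/\sqrt{\|\sigma\|}+\alpha$, $\alpha>0$. Solutions are understood in the sense of Filippov. $BK_2$ is assumed nonsingular, $z=\eta+(BK_2)^{-1}f(t)$ and $x=[\sigma^T\ z^T]^T\in\mathbb{R}^{2n}$. $R(\sigma)=\mathrm{diag}(c(\sigma)I_n,I_n)$, $G_0=[I_n\ \ 0]\in\mathbb{R}^{n\times 2n}$ (so $\sigma=G_0x$). The symbol $\bullet$ denotes the symmetric block. $\|\cdot\|$ is the Euclidean norm. *)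

theory Defs
  imports "HOL-Analysis.Analysis"
begin

text \<open>Vectors in R^r, R^n are \<open>real^'r\<close>, \<open>real^'n\<close>; R^{2n} is \<open>real^('n + 'n)\<close>,
  whose first block (Inl) is sigma and second block (Inr) is z.\<close>

definition pos_def_mat :: "real^'a^'a \<Rightarrow> bool" where
  "pos_def_mat M \<longleftrightarrow> transpose M = M \<and> (\<forall>w. w \<noteq> 0 \<longrightarrow> 0 < w \<bullet> (M *v w))"

definition neg_def_mat :: "real^'a^'a \<Rightarrow> bool" where
  "neg_def_mat M \<longleftrightarrow> transpose M = M \<and> (\<forall>w. w \<noteq> 0 \<longrightarrow> w \<bullet> (M *v w) < 0)"

definition block_mat :: "real^'a^'a \<Rightarrow> real^'b^'a \<Rightarrow> real^'a^'b \<Rightarrow> real^'b^'b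
    \<Rightarrow> real^('a + 'b)^('a + 'b)" where
  "block_mat M11 M12 M21 M22 = (\<chi> i j. case i of
      Inl a \<Rightarrow> (case j of Inl a' \<Rightarrow> M11 $ a $ a' | Inr b' \<Rightarrow> M12 $ a $ b')
    | Inr b \<Rightarrow> (case j of Inl a' \<Rightarrow> M21 $ b $ a' | Inr b' \<Rightarrow> M22 $ b $ b'))"

definition G0 :: "real^('n + 'n)^'n" where
  "G0 = (\<chi> i j. if j = Inl i then 1 else 0)"

definition cgain :: "real \<Rightarrow> real^'n \<Rightarrow> real" where
  "cgain \<alpha> \<sigma> = 1 / sqrt (norm \<sigma>) + \<alpha>"

definition Rmat :: "real \<Rightarrow> real^'n \<Rightarrow> real^('n + 'n)^('n + 'n)" where
  "Rmat \<alpha> \<sigma> = (\<chi> i j. if i = j then (case i of Inl _ \<Rightarrow> cgain \<alpha> \<sigma> | Inr _ \<Rightarrow> 1) else 0)"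

definition vfun :: "real^'r^'r \<Rightarrow> real^'r \<Rightarrow> real" where
  "vfun S \<zeta> = \<zeta> \<bullet> (S *v \<zeta>)"

definition Vfun :: "real \<Rightarrow> real^('n::finite+'n)^('n+'n) \<Rightarrow> real^('n+'n) \<Rightarrow> real" where
  "Vfun \<alpha> P x = (let R = Rmat \<alpha> (G0 *v x) in x \<bullet> (R *v (P *v (R *v x))))"

text \<open>Time derivative of v along the linear subsystem zeta' = A zeta + E sigma, sigma = G0 x:
  vdot = zeta'^T S zeta + zeta^T S zeta'.\<close>
definition vdot :: "real^'r::finite^'r \<Rightarrow> real^'r^'r \<Rightarrow> real^'n::finite^'r \<Rightarrow> real^'r \<Rightarrow> real^('n::finite+'n) \<Rightarrow> real" where
  "vdot S A E \<zeta> x = (let \<zeta>' = A *v \<zeta> + E *v (G0 *v x) in \<zeta>' \<bullet> (S *v \<zeta>) + \<zeta> \<bullet> (S *v \<zeta>'))"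

end

theory Submission
  imports Defs
begin

text \<open>Evaluate the negative definite block form at \<open>(\<zeta>, t R(\<sigma>) x)\<close> with \<open>t = \<alpha> / c(\<sigma>)\<close>.
  Since \<open>G\<^sub>0 R(\<sigma>) x = c(\<sigma>) \<sigma>\<close>, the factors \<open>t\<close>, \<open>1/\<alpha>\<close> and \<open>c(\<sigma>)\<close> cancel in the coupling block,
  which therefore contributes exactly the \<open>\<sigma>\<close>-part \<open>2 (E\<sigma>)\<^sup>T S \<zeta>\<close> of \<open>v'\<close>, while the upper block
  contributes the \<open>\<zeta>\<close>-part together with \<open>\<rho> v\<close>. The lower block contributes \<open>-\<rho> t\<^sup>2 V\<close>,
  and \<open>-\<rho> t\<^sup>2 V \<ge> -\<rho> V\<close> because \<open>c(\<sigma>) \<ge> \<alpha>\<close> and \<open>V \<ge> 0\<close>.\<close>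

lemma sum_UNIV_Plus:
  fixes f :: "'a::finite + 'b::finite \<Rightarrow> 'c::comm_monoid_add"
  shows "sum f UNIV = (\<Sum>a\<in>UNIV. f (Inl a)) + (\<Sum>b\<in>UNIV. f (Inr b))"
  using sum.Plus[of UNIV UNIV f] by (simp add: comp_def)

lemma inner_matrix_vector_transpose:
  "(x::real^'n::finite) \<bullet> (M *v y) = (transpose M *v x) \<bullet> y"
  by (simp add: dot_lmul_matrix)

lemma inner_symmetric_matrix_commute:
  assumes "transpose S = S"
  shows "(x::real^'n::finite) \<bullet> (S *v y) = y \<bullet> (S *v x)"
  by (metis assms inner_commute inner_matrix_vector_transpose)

definition block_vec :: "real^'a \<Rightarrow> real^'b \<Rightarrow> real^('a + 'b)" where
  "block_vec u v = (\<chi> i. case i of Inl a \<Rightarrow> u $ a | Inr b \<Rightarrow> v $ b)"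

lemma block_vec_eq_0_iff: "block_vec u v = 0 \<longleftrightarrow> u = 0 \<and> v = 0"
  by (auto simp: block_vec_def vec_eq_iff split: sum.split)

lemma quadratic_form_block_mat:
  fixes u :: "real^'a::finite" and v :: "real^'b::finite"
  shows "block_vec u v \<bullet> (block_mat M11 M12 M21 M22 *v block_vec u v)
    = u \<bullet> (M11 *v u) + u \<bullet> (M12 *v v) + v \<bullet> (M21 *v u) + v \<bullet> (M22 *v v)"
  by (simp add: inner_vec_def matrix_vector_mult_def block_vec_def block_mat_def sum_UNIV_Plus
       sum_distrib_left distrib_left sum.distrib algebra_simps)

lemma neg_def_block_mat_quadratic_form:
  assumes "neg_def_mat (block_mat Q (transpose N) N M)" and "u \<noteq> 0"
  shows "u \<bullet> (Q *v u) + 2 * (v \<bullet> (N *v u)) + v \<bullet> (M *v v) < 0"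
proof -
  have "block_vec u v \<bullet> (block_mat Q (transpose N) N M *v block_vec u v) < 0"
    using assms by (simp add: neg_def_mat_def block_vec_eq_0_iff)
  moreover have "u \<bullet> (transpose N *v v) = v \<bullet> (N *v u)"
    by (simp add: inner_matrix_vector_transpose inner_commute)
  ultimately show ?thesis
    by (simp add: quadratic_form_block_mat)
qed

lemma quadratic_form_shifted_lyapunov_operator:
  fixes A S :: "real^'n::finite^'n"
  assumes "transpose S = S"
  shows "z \<bullet> ((transpose A ** S + S ** A + \<rho> *\<^sub>R S) *v z)
    = 2 * ((A *v z) \<bullet> (S *v z)) + \<rho> * vfun S z"
proof -
  have "z \<bullet> (transpose A *v (S *v z)) = (A *v z) \<bullet> (S *v z)"
    by (subst inner_matrix_vector_transpose) simp
  moreover have "z \<bullet> (S *v (A *v z)) = (A *v z) \<bullet> (S *v z)"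
    using assms by (rule inner_symmetric_matrix_commute)
  ultimately show ?thesis
    by (simp add: matrix_vector_mult_add_rdistrib matrix_vector_mul_assoc inner_add_right
        scaleR_matrix_vector_assoc[symmetric] vfun_def)
qed

lemma quadratic_form_neg_scaleR:
  fixes P :: "real^'n::finite^'n"
  shows "(t *\<^sub>R y) \<bullet> ((- (\<rho> *\<^sub>R P)) *v (t *\<^sub>R y)) = - (\<rho> * t\<^sup>2 * (y \<bullet> (P *v y)))"
proof -
  have "(- (\<rho> *\<^sub>R P)) *v (t *\<^sub>R y) = (- \<rho>) *\<^sub>R (P *v (t *\<^sub>R y))"
    by (simp only: scaleR_minus_left[symmetric] scaleR_matrix_vector_assoc)
  then show ?thesis
    by (simp add: matrix_vector_mult_scaleR power2_eq_square)
qed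

lemma pos_def_mat_quadratic_form_nonneg: "pos_def_mat P \<Longrightarrow> 0 \<le> y \<bullet> (P *v y)"
  by (cases "y = 0") (auto simp: pos_def_mat_def less_imp_le)

lemma vdot_eq:
  assumes "transpose S = S"
  shows "vdot S A E \<zeta> x = 2 * ((A *v \<zeta> + E *v (G0 *v x)) \<bullet> (S *v \<zeta>))"
  using inner_symmetric_matrix_commute[OF assms, of \<zeta>] by (simp add: vdot_def Let_def)

lemma G0_mult_vec_nth: "(G0 *v y) $ i = y $ Inl i"
  by (simp add: G0_def matrix_vector_mult_def if_distrib if_distribR cong: if_cong)

lemma Rmat_mult_vec_nth:
  "(Rmat \<alpha> s *v y) $ j = (case j of Inl _ \<Rightarrow> cgain \<alpha> s | Inr _ \<Rightarrow> 1) * y $ j"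
  by (simp add: Rmat_def matrix_vector_mult_def if_distrib if_distribR cong: if_cong)

lemma transpose_Rmat: "transpose (Rmat \<alpha> s) = Rmat \<alpha> s"
  by (auto simp: Rmat_def transpose_def vec_eq_iff)

lemma G0_Rmat: "G0 *v (Rmat \<alpha> s *v y) = cgain \<alpha> s *\<^sub>R (G0 *v y)"
  by (simp add: vec_eq_iff G0_mult_vec_nth Rmat_mult_vec_nth)

lemma Vfun_eq:
  "Vfun \<alpha> P x = (Rmat \<alpha> (G0 *v x) *v x) \<bullet> (P *v (Rmat \<alpha> (G0 *v x) *v x))"
  unfolding Vfun_def Let_def by (subst inner_matrix_vector_transpose) (simp add: transpose_Rmat)

lemma coupling_block_Rmat:
  "(t *\<^sub>R (Rmat \<alpha> (G0 *v x) *v x)) \<bullet> ((k *\<^sub>R (transpose G0 ** transpose E ** S)) *v \<zeta>)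
    = t * k * cgain \<alpha> (G0 *v x) * ((E *v (G0 *v x)) \<bullet> (S *v \<zeta>))"
proof -
  let ?y = "Rmat \<alpha> (G0 *v x) *v x"
  have "(t *\<^sub>R ?y) \<bullet> ((k *\<^sub>R (transpose G0 ** transpose E ** S)) *v \<zeta>)
      = t * k * (?y \<bullet> (transpose G0 *v (transpose E *v (S *v \<zeta>))))"
    by (simp add: scaleR_matrix_vector_assoc[symmetric] matrix_vector_mul_assoc matrix_mul_assoc
        del: transpose_matrix_vector)
  also have "?y \<bullet> (transpose G0 *v (transpose E *v (S *v \<zeta>)))
      = (G0 *v ?y) \<bullet> (transpose E *v (S *v \<zeta>))"
    by (subst inner_matrix_vector_transpose) simp
  also have "\<dots> = cgain \<alpha> (G0 *v x) * ((E *v (G0 *v x)) \<bullet> (S *v \<zeta>))"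
    unfolding G0_Rmat
    by (subst inner_matrix_vector_transpose) (simp add: matrix_vector_mult_scaleR)
  finally show ?thesis by simp
qed

text \<open>At \<open>\<sigma> = 0\<close> the gain is the junk value \<open>\<alpha>\<close>, because \<open>1 / 0 = 0\<close>.\<close>
lemma cgain_ge: "\<alpha> \<le> cgain \<alpha> \<sigma>"
  by (simp add: cgain_def)

theorem lemma1:
  fixes A S :: "real^'r^'r" and E :: "real^'n^'r"
    and P :: "real^('n + 'n)^('n + 'n)" and \<alpha> \<rho> :: real
  assumes "\<alpha> > 0" and "\<rho> > 0"
    and "pos_def_mat S" and "pos_def_mat P"
    and "neg_def_mat (block_mat
           (transpose A ** S + S ** A + \<rho> *\<^sub>R S)
           (transpose ((1 / \<alpha>) *\<^sub>R (transpose G0 ** transpose E ** S)))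
           ((1 / \<alpha>) *\<^sub>R (transpose G0 ** transpose E ** S))
           (- (\<rho> *\<^sub>R P)))"
  shows "\<forall>\<zeta> x. \<zeta> \<noteq> 0 \<longrightarrow> x \<noteq> 0 \<longrightarrow>
           vdot S A E \<zeta> x < \<rho> * (Vfun \<alpha> P x - vfun S \<zeta>)"
proof (intro allI impI)
  fix \<zeta> :: "real^'r" and x :: "real^('n + 'n)"
  assume "\<zeta> \<noteq> 0"
  define c where "c = cgain \<alpha> (G0 *v x)"
  define t where "t = \<alpha> / c"
  have S_sym: "transpose S = S" using assms(3) by (simp add: pos_def_mat_def)
  have c: "0 < c" "\<alpha> \<le> c" using cgain_ge[of \<alpha> "G0 *v x"] assms(1) by (simp_all add: c_def)
  have cancel: "t * (1 / \<alpha>) * c = 1" using c assms(1) by (simp add: t_def)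
  have "vdot S A E \<zeta> x + \<rho> * vfun S \<zeta> - \<rho> * t\<^sup>2 * Vfun \<alpha> P x < 0"
    using neg_def_block_mat_quadratic_form[OF assms(5) \<open>\<zeta> \<noteq> 0\<close>,
        of "t *\<^sub>R (Rmat \<alpha> (G0 *v x) *v x)"]
    unfolding quadratic_form_shifted_lyapunov_operator[OF S_sym] coupling_block_Rmat
      quadratic_form_neg_scaleR vdot_eq[OF S_sym] Vfun_eq c_def[symmetric] cancel
    by (simp add: inner_add_left)
  moreover have "\<rho> * t\<^sup>2 * Vfun \<alpha> P x \<le> \<rho> * Vfun \<alpha> P x"
    using c assms(1,2) pos_def_mat_quadratic_form_nonneg[OF assms(4)]
    by (simp add: t_def Vfun_eq mult_left_le_one_le power_le_one)
  ultimately show "vdot S A E \<zeta> x < \<rho> * (Vfun \<alpha> P x - vfun S \<zeta>)"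
    by (simp add: right_diff_distrib)
qed

end
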